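(* Let $k\ge3$, $\ell=k-2$, and let $\mathcal C\subseteq(S^{k-1})^n$ be a vector $k$-separating code with $|\mathcal C|>k$. Let $\{S_1,\dots,S_{k-1}\}$ be a uniformly random $(k-1)$-element subset of $\mathcal C$ and let $j$ be uniform in $[n]$ independent of it. Then \[ \frac{\log_2(|\mathcal C|-\ell)}{n}\le \Pr\bigl[S_{a}(j)\perp S_{b}(j)\text{ for all } a\neq b\bigr], \] where $S_a(j)$ is the $j$-th coordinate of $S_a$. Moreover, if $Y_1,\dots,Y_{k-1}$ are drawn independently and uniformly from $\mathcal C$ (with replacement) and $j$ uniform in $[n]$, then \[ \Bigl(1-\frac{\ell^2}{|\mathcal C|}\Bigr)\frac{\log_2(|\mathcal C|-\ell)}{n}\le \Pr\bigl[Y_a(j)\perp Y_b(j)\text{ for all }a\ne b\bigr]. \]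
   Context: $S^{k-1}$ is the unit sphere in $\mathbb R^k$. A subset $\mathcal C\subseteq (S^{k-1})^n$ is vector $k$-separating if for any $k$ distinct codewords $c^{(1)},\dots,c^{(k)}\in\mathcal C$ there is a coordinate $i\in[n]$ such that $c^{(1)}_i,\dots,c^{(k)}_i$ are mutually orthogonal. *)

theory Defs
  imports "HOL-Probability.Probability"
begin

definition sphere_words :: "nat \<Rightarrow> (nat \<Rightarrow> real ^ 'k) set" where
  "sphere_words n = PiE {..<n} (\<lambda>_. sphere 0 1)"

definition vector_separating :: "nat \<Rightarrow> (nat \<Rightarrow> real ^ 'k) set \<Rightarrow> bool" where
  "vector_separating n C \<longleftrightarrow> C \<subseteq> sphere_words n \<and>
     (\<forall>T. T \<subseteq> C \<longrightarrow> card T = CARD('k) \<longrightarrow>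
        (\<exists>i<n. \<forall>x\<in>T. \<forall>y\<in>T. x \<noteq> y \<longrightarrow> x i \<bullet> y i = 0))"

end

(*
  Fix a set R of k - 2 codewords and let d(c) be the number of coordinates at which R plus c
  is pairwise orthogonal. For distinct x, y outside R some coordinate j makes R, x, y pairwise
  orthogonal. At j every such extension lies in the plane orthogonal to the entries of R, and
  colouring the unit vectors of that plane by the quadrant of their coordinates in an
  orthonormal frame gives orthogonal vectors different colours. So the coordinates carry
  partial 2-colourings of C - R separating every pair, whence Hansel's lemma
  sum_c 2^(-d(c)) <= 1 and, by Gibbs' inequality, sum_c d(c) >= |C - R| log2 |C - R|.
  Averaging over R gives the bound for a random (k-1)-set. A random (k-1)-tuple is injective
  with probability at least 1 - binom(k-1, 2)/|C| >= 1 - l^2/|C|, and the image of a random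
  injective tuple is a random (k-1)-set.
*)

theory Submission
  imports Defs
begin

section \<open>Orthogonal pairs in the plane\<close>

lemma inner_eq_sum_orthonormal_basis:
  fixes B :: "'a::euclidean_space set"
  assumes orth: "pairwise orthogonal B" and unit: "\<And>b. b \<in> B \<Longrightarrow> norm b = 1"
    and card: "card B = DIM('a)"
  shows "x \<bullet> y = (\<Sum>b\<in>B. (x \<bullet> b) * (y \<bullet> b))"
proof -
  have "finite B"
    using card card.infinite by fastforce
  have "independent B"
    using unit by (intro pairwise_orthogonal_independent[OF orth]) force
  then have "x \<in> span B"
    using card card_ge_dim_independent[of B UNIV] by auto
  then have "(\<Sum>b\<in>B. (x \<bullet> b) *\<^sub>R b) = x"
    using orthonormal_basis_expand[OF orth unit _ \<open>finite B\<close>] by simp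
  then have "x \<bullet> y = (\<Sum>b\<in>B. (x \<bullet> b) *\<^sub>R b) \<bullet> y"
    by simp
  also have "\<dots> = (\<Sum>b\<in>B. (x \<bullet> b) * (b \<bullet> y))"
    by (simp add: inner_sum_left)
  finally show ?thesis
    by (simp add: inner_commute)
qed

text \<open>A nonzero vector \<open>(a, b)\<close> and its rotations by a right angle, \<open>(-b, a)\<close> and
  \<open>(b, -a)\<close>, always get different colours.\<close>
definition quadrant_colour :: "real \<Rightarrow> real \<Rightarrow> bool" where
  "quadrant_colour a b \<longleftrightarrow> b\<^sup>2 < a\<^sup>2 \<or> (a\<^sup>2 = b\<^sup>2 \<and> 0 < a * b)"

lemma quadrant_colour_orthogonal:
  fixes a b c d :: real
  assumes ab: "a\<^sup>2 + b\<^sup>2 = 1" and cd: "c\<^sup>2 + d\<^sup>2 = 1" and orth: "a * c + b * d = 0"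
  shows "quadrant_colour a b \<noteq> quadrant_colour c d"
proof -
  have "c\<^sup>2 - b\<^sup>2 = c\<^sup>2 * (a\<^sup>2 + b\<^sup>2) - b\<^sup>2 * (c\<^sup>2 + d\<^sup>2)"
    using ab cd by simp
  also have "\<dots> = (a * c - b * d) * (a * c + b * d)"
    by (simp add: algebra_simps power2_eq_square)
  finally have c2: "c\<^sup>2 = b\<^sup>2" using orth by simp
  have "a * b + c * d = a * b * (c\<^sup>2 + d\<^sup>2) + c * d * (a\<^sup>2 + b\<^sup>2)"
    using ab cd by simp
  also have "\<dots> = (a * c + b * d) * (a * d + b * c)"
    by (simp add: algebra_simps power2_eq_square)
  finally have cd_eq: "c * d = - (a * b)" using orth by simp
  have d2: "d\<^sup>2 = a\<^sup>2" using ab cd c2 by linarith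
  have "a * b \<noteq> 0" if "a\<^sup>2 = b\<^sup>2"
  proof -
    have "a\<^sup>2 \<noteq> 0" "b\<^sup>2 \<noteq> 0" using ab that by linarith+
    then show ?thesis by simp
  qed
  then show ?thesis
    unfolding quadrant_colour_def c2 d2 cd_eq by linarith
qed

lemma quadrant_colour_separates:
  fixes I :: "'a::euclidean_space set"
  assumes I: "finite I" "card I + 2 = DIM('a)" "pairwise orthogonal I" "\<And>b. b \<in> I \<Longrightarrow> norm b = 1"
    and unit: "norm p = 1" "norm q = 1" "norm x = 1" "norm y = 1"
    and perp: "\<And>b. b \<in> I \<Longrightarrow> p \<bullet> b = 0 \<and> q \<bullet> b = 0 \<and> x \<bullet> b = 0 \<and> y \<bullet> b = 0"
    and pq: "p \<bullet> q = 0" and xy: "x \<bullet> y = 0"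
  shows "quadrant_colour (x \<bullet> p) (x \<bullet> q) \<noteq> quadrant_colour (y \<bullet> p) (y \<bullet> q)"
proof -
  have "p \<notin> I" "q \<notin> I" "p \<noteq> q"
    using perp unit pq by (auto simp: norm_eq_1)
  define B where "B = insert p (insert q I)"
  have "pairwise orthogonal B"
    using I(3) perp pq by (auto simp: B_def pairwise_insert orthogonal_def inner_commute)
  moreover have "\<And>b. b \<in> B \<Longrightarrow> norm b = 1"
    using I(4) unit by (auto simp: B_def)
  moreover have "card B = DIM('a)"
    using I(1,2) \<open>p \<notin> I\<close> \<open>q \<notin> I\<close> \<open>p \<noteq> q\<close> by (simp add: B_def)
  ultimately have expand: "z \<bullet> w = (z \<bullet> p) * (w \<bullet> p) + (z \<bullet> q) * (w \<bullet> q)"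
    if "\<And>b. b \<in> I \<Longrightarrow> z \<bullet> b = 0" for z w
    using inner_eq_sum_orthonormal_basis[of B z w] I(1) \<open>p \<notin> I\<close> \<open>q \<notin> I\<close> \<open>p \<noteq> q\<close> that
    by (simp add: B_def)
  show ?thesis
  proof (rule quadrant_colour_orthogonal)
    show "(x \<bullet> p)\<^sup>2 + (x \<bullet> q)\<^sup>2 = 1"
      using expand[of x x] perp unit by (simp add: norm_eq_1 power2_eq_square)
    show "(y \<bullet> p)\<^sup>2 + (y \<bullet> q)\<^sup>2 = 1"
      using expand[of y y] perp unit by (simp add: norm_eq_1 power2_eq_square)
    show "(x \<bullet> p) * (y \<bullet> p) + (x \<bullet> q) * (y \<bullet> q) = 0"
      using expand[of x y] perp xy by simp
  qed
qed

section \<open>Hansel's lemma\<close>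

lemma card_Collect_less_Suc:
  "card {j. j < Suc n \<and> P j} = card {j. j < n \<and> P j} + (if P n then 1 else 0)"
proof -
  have "{j. j < Suc n \<and> P j} = (if P n then insert n else id) {j. j < n \<and> P j}"
    by (auto simp: less_Suc_eq)
  then show ?thesis
    by simp
qed

lemma hansel_inequality:
  fixes P colour :: "nat \<Rightarrow> 'a \<Rightarrow> bool"
  assumes "finite V"
    and "\<And>x y. x \<in> V \<Longrightarrow> y \<in> V \<Longrightarrow> x \<noteq> y \<Longrightarrow> \<exists>j<n. P j x \<and> P j y \<and> colour j x \<noteq> colour j y"
  shows "(\<Sum>x\<in>V. (1/2::real) ^ card {j. j < n \<and> P j x}) \<le> 1"
  using assms
proof (induction n arbitrary: V)
  case 0
  then have "card V \<le> 1"
    by (auto simp: card_le_Suc0_iff_eq)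
  then show ?case
    by simp
next
  case (Suc n)
  let ?w = "\<lambda>x. (1/2::real) ^ card {j. j < n \<and> P j x}"
  have IH: "(\<Sum>x\<in>V'. ?w x) \<le> 1"
    if "V' \<subseteq> V" and "\<And>x. x \<in> V' \<Longrightarrow> P n x \<Longrightarrow> colour n x = c" for V' c
  proof (rule Suc.IH)
    show "finite V'"
      using Suc.prems(1) that(1) by (rule finite_subset[rotated])
    fix x y assume "x \<in> V'" "y \<in> V'" "x \<noteq> y"
    moreover have "x \<in> V" "y \<in> V"
      using that(1) \<open>x \<in> V'\<close> \<open>y \<in> V'\<close> by auto
    ultimately obtain j where j: "j < Suc n" "P j x" "P j y" "colour j x \<noteq> colour j y"
      using Suc.prems(2) by metis
    moreover have "j \<noteq> n"
    proof
      assume "j = n"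
      then have "colour j x = c" "colour j y = c"
        using j that(2) \<open>x \<in> V'\<close> \<open>y \<in> V'\<close> by simp_all
      then show False
        using j(4) by simp
    qed
    ultimately show "\<exists>j<n. P j x \<and> P j y \<and> colour j x \<noteq> colour j y"
      by (auto simp: less_Suc_eq)
  qed
  define V1 where "V1 = {x \<in> V. P n x \<longrightarrow> colour n x}"
  define V2 where "V2 = {x \<in> V. P n x \<longrightarrow> \<not> colour n x}"
  have "2 * (\<Sum>x\<in>V. (1/2::real) ^ card {j. j < Suc n \<and> P j x})
      = (\<Sum>x\<in>V. (if P n x \<longrightarrow> colour n x then ?w x else 0)
                + (if P n x \<longrightarrow> \<not> colour n x then ?w x else 0))"
    unfolding sum_distrib_left by (rule sum.cong) (auto simp: card_Collect_less_Suc)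
  also have "\<dots> = (\<Sum>x\<in>V1. ?w x) + (\<Sum>x\<in>V2. ?w x)"
    using Suc.prems(1) by (simp add: V1_def V2_def sum.inter_filter sum.distrib)
  also have "\<dots> \<le> 1 + 1"
    by (intro add_mono IH) (auto simp: V1_def V2_def)
  finally show ?case
    by simp
qed

lemma card_mult_log_card_le_sum:
  fixes d :: "'a \<Rightarrow> nat"
  assumes "finite V" and kraft: "(\<Sum>x\<in>V. (1/2::real) ^ d x) \<le> 1"
  shows "real (card V) * log 2 (card V) \<le> (\<Sum>x\<in>V. real (d x))"
proof (cases "V = {}")
  case True
  then show ?thesis by simp
next
  case False
  define N where "N = real (card V)"
  have "N > 0"
    using False \<open>finite V\<close> by (simp add: N_def card_gt_0_iff)
  have "ln N - real (d x) * ln 2 \<le> N * (1/2) ^ d x - 1" for x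
  proof -
    have "ln (N * (1/2) ^ d x) \<le> N * (1/2) ^ d x - 1"
      using \<open>N > 0\<close> by (intro ln_le_minus_one) simp
    then show ?thesis
      using \<open>N > 0\<close> by (simp add: ln_mult ln_realpow ln_div)
  qed
  then have "(\<Sum>x\<in>V. ln N - real (d x) * ln 2) \<le> (\<Sum>x\<in>V. N * (1/2) ^ d x - 1)"
    by (rule sum_mono)
  then have "N * ln N - ln 2 * (\<Sum>x\<in>V. real (d x)) \<le> N * (\<Sum>x\<in>V. (1/2) ^ d x) - N"
    by (simp add: sum_subtractf sum_distrib_left sum_distrib_right N_def mult.commute)
  also have "\<dots> \<le> 0"
    using kraft \<open>N > 0\<close> by (simp add: mult_le_cancel_left1)
  finally have "N * ln N / ln 2 \<le> (\<Sum>x\<in>V. real (d x))"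
    by (simp add: field_simps)
  then show ?thesis
    by (simp add: N_def log_def)
qed

section \<open>Extensions of a set of codewords\<close>

definition orthogonal_at :: "('i \<Rightarrow> 'a::real_inner) set \<Rightarrow> 'i \<Rightarrow> bool" where
  "orthogonal_at T j \<longleftrightarrow> (\<forall>x\<in>T. \<forall>y\<in>T. x \<noteq> y \<longrightarrow> x j \<bullet> y j = 0)"

lemma orthogonal_at_insert:
  "z \<notin> T \<Longrightarrow> orthogonal_at (insert z T) j \<longleftrightarrow> orthogonal_at T j \<and> (\<forall>x\<in>T. z j \<bullet> x j = 0)"
  by (auto simp: orthogonal_at_def inner_commute)

lemma orthogonal_at_image_iff:
  "inj_on Y A \<Longrightarrow> orthogonal_at (Y ` A) j \<longleftrightarrow> (\<forall>a\<in>A. \<forall>b\<in>A. a \<noteq> b \<longrightarrow> Y a j \<bullet> Y b j = 0)"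
  by (auto simp: orthogonal_at_def inj_on_def)

lemma inj_on_if_orthogonal_at:
  assumes "orthogonal_at T j" and "\<And>x. x \<in> T \<Longrightarrow> norm (x j) = 1"
  shows "inj_on (\<lambda>x. x j) T"
  using assms unfolding inj_on_def orthogonal_at_def by (metis norm_eq_1 zero_neq_one)

lemma quadrant_colour_separates_at:
  fixes R :: "('i \<Rightarrow> 'a::euclidean_space) set"
  assumes R: "finite R" "card R + 2 = DIM('a)"
    and unit: "\<And>z. z \<in> R \<union> {p, q, x, y} \<Longrightarrow> norm (z j) = 1"
    and extends: "\<And>z. z \<in> {p, q, x, y} \<Longrightarrow> z \<notin> R \<and> orthogonal_at (insert z R) j"
    and pq: "p j \<bullet> q j = 0" and xy: "x j \<bullet> y j = 0"
  shows "quadrant_colour (x j \<bullet> p j) (x j \<bullet> q j) \<noteq> quadrant_colour (y j \<bullet> p j) (y j \<bullet> q j)"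
proof (rule quadrant_colour_separates[where I = "(\<lambda>r. r j) ` R"])
  have "orthogonal_at R j \<and> (\<forall>r\<in>R. z j \<bullet> r j = 0)" if "z \<in> {p, q, x, y}" for z
    using extends[OF that] orthogonal_at_insert by metis
  then have "orthogonal_at R j" and perp: "\<And>z r. z \<in> {p, q, x, y} \<Longrightarrow> r \<in> R \<Longrightarrow> z j \<bullet> r j = 0"
    by auto
  then have "inj_on (\<lambda>r. r j) R"
    using unit by (intro inj_on_if_orthogonal_at) auto
  then show "card ((\<lambda>r. r j) ` R) + 2 = DIM('a)"
    using R(2) by (simp add: card_image)
  show "pairwise orthogonal ((\<lambda>r. r j) ` R)"
    using \<open>orthogonal_at R j\<close> by (auto simp: pairwise_def orthogonal_def orthogonal_at_def)
  show "p j \<bullet> b = 0 \<and> q j \<bullet> b = 0 \<and> x j \<bullet> b = 0 \<and> y j \<bullet> b = 0" if "b \<in> (\<lambda>r. r j) ` R" for b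
    using that perp by auto
  show "finite ((\<lambda>r. r j) ` R)"
    using R(1) by simp
  show "norm b = 1" if "b \<in> (\<lambda>r. r j) ` R" for b
    using that unit by auto
  show "norm (p j) = 1" "norm (q j) = 1" "norm (x j) = 1" "norm (y j) = 1"
    using unit by auto
qed (fact pq xy)+

lemma vector_separating_norm:
  fixes C :: "(nat \<Rightarrow> real ^ 'k) set"
  assumes "vector_separating n C" "x \<in> C" "j < n"
  shows "norm (x j) = 1"
  using assms by (auto simp: vector_separating_def sphere_words_def PiE_iff)

lemma vector_separating_orthogonal_at:
  fixes C T :: "(nat \<Rightarrow> real ^ 'k) set"
  assumes "vector_separating n C" "T \<subseteq> C" "card T = CARD('k)"
  shows "\<exists>j<n. orthogonal_at T j"
  using assms unfolding vector_separating_def orthogonal_at_def by simp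

lemma vector_separating_extensions_colouring:
  fixes C R :: "(nat \<Rightarrow> real ^ 'k) set"
  assumes vs: "vector_separating n C" and R: "finite R" "R \<subseteq> C" "card R + 2 = CARD('k)"
  obtains colour :: "nat \<Rightarrow> (nat \<Rightarrow> real ^ 'k) \<Rightarrow> bool" where
    "\<And>x y. x \<in> C - R \<Longrightarrow> y \<in> C - R \<Longrightarrow> x \<noteq> y \<Longrightarrow>
       \<exists>j<n. orthogonal_at (insert x R) j \<and> orthogonal_at (insert y R) j \<and> colour j x \<noteq> colour j y"
proof -
  define extends where "extends j c \<longleftrightarrow> c \<in> C - R \<and> orthogonal_at (insert c R) j" for j c
  define good where "good j u v \<longleftrightarrow> extends j u \<and> extends j v \<and> u j \<bullet> v j = 0" for j u v
  \<comment> \<open>Some orthogonal pair of extensions at coordinate \<open>j\<close>, if there is one: its entries at \<open>j\<close>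
     span the plane orthogonal to the entries of \<open>R\<close>.\<close>
  define p where "p j = (SOME u. \<exists>v. good j u v)" for j
  define q where "q j = (SOME v. good j (p j) v)" for j
  have pq: "good j (p j) (q j)" if "good j u v" for j u v
  proof -
    have "\<exists>v. good j (p j) v"
      unfolding p_def using that by (intro someI_ex[of "\<lambda>u. \<exists>v. good j u v"]) blast
    then show ?thesis
      unfolding q_def by (rule someI_ex)
  qed
  show thesis
  proof (rule that[of "\<lambda>j x. quadrant_colour (x j \<bullet> p j j) (x j \<bullet> q j j)"])
    fix x y assume x: "x \<in> C - R" and y: "y \<in> C - R" and "x \<noteq> y"
    have "insert x (insert y R) \<subseteq> C" "card (insert x (insert y R)) = CARD('k)"
      using x y \<open>x \<noteq> y\<close> R by auto
    then obtain j where "j < n" and "orthogonal_at (insert x (insert y R)) j"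
      using vector_separating_orthogonal_at[OF vs] by blast
    then have "good j x y"
      using x y \<open>x \<noteq> y\<close> by (auto simp: good_def extends_def orthogonal_at_def)
    then have "good j (p j) (q j)"
      by (rule pq)
    have "quadrant_colour (x j \<bullet> p j j) (x j \<bullet> q j j) \<noteq> quadrant_colour (y j \<bullet> p j j) (y j \<bullet> q j j)"
    proof (rule quadrant_colour_separates_at[OF R(1), where p = "p j" and q = "q j"])
      show "card R + 2 = DIM(real ^ 'k)"
        using R(3) by simp
      show "norm (z j) = 1" if "z \<in> R \<union> {p j, q j, x, y}" for z
        using that R(2) \<open>good j x y\<close> \<open>good j (p j) (q j)\<close> vector_separating_norm[OF vs _ \<open>j < n\<close>]
        by (auto simp: good_def extends_def)
    qed (use \<open>good j x y\<close> \<open>good j (p j) (q j)\<close> in \<open>auto simp: good_def extends_def\<close>)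
    then show "\<exists>j<n. orthogonal_at (insert x R) j \<and> orthogonal_at (insert y R) j \<and>
        quadrant_colour (x j \<bullet> p j j) (x j \<bullet> q j j) \<noteq> quadrant_colour (y j \<bullet> p j j) (y j \<bullet> q j j)"
      using \<open>j < n\<close> \<open>good j x y\<close> by (auto simp: good_def extends_def)
  qed
qed

lemma card_mult_log_card_le_sum_orthogonal_extensions:
  fixes C R :: "(nat \<Rightarrow> real ^ 'k) set"
  assumes "vector_separating n C" and "finite C" "R \<subseteq> C" "card R + 2 = CARD('k)"
  shows "real (card (C - R)) * log 2 (card (C - R))
           \<le> (\<Sum>c\<in>C - R. real (card {j. j < n \<and> orthogonal_at (insert c R) j}))"
proof -
  have "finite R"
    using finite_subset[OF assms(3,2)] .
  obtain colour :: "nat \<Rightarrow> (nat \<Rightarrow> real ^ 'k) \<Rightarrow> bool"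
    where sep: "\<And>x y. x \<in> C - R \<Longrightarrow> y \<in> C - R \<Longrightarrow> x \<noteq> y \<Longrightarrow>
      \<exists>j<n. orthogonal_at (insert x R) j \<and> orthogonal_at (insert y R) j \<and> colour j x \<noteq> colour j y"
    using vector_separating_extensions_colouring[OF assms(1) \<open>finite R\<close> assms(3,4)] by blast
  have "finite (C - R)"
    using assms(2) by simp
  from hansel_inequality[OF this sep]
  show ?thesis
    by (rule card_mult_log_card_le_sum[OF \<open>finite (C - R)\<close>])
qed

section \<open>Subsets and injective tuples\<close>

lemma sum_subsets_insert:
  fixes g :: "'a set \<Rightarrow> 'b::comm_semiring_1"
  assumes "finite C"
  shows "(\<Sum>R | R \<subseteq> C \<and> card R = l. \<Sum>c\<in>C - R. g (insert c R))
           = of_nat (Suc l) * (\<Sum>T | T \<subseteq> C \<and> card T = Suc l. g T)"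
proof -
  let ?S' = "{R. R \<subseteq> C \<and> card R = l}" and ?S = "{T. T \<subseteq> C \<and> card T = Suc l}"
  have fin: "finite ?S'" "finite ?S"
    using assms by (auto intro: finite_subset[of _ "Pow C"])
  have "(\<Sum>R\<in>?S'. \<Sum>c\<in>C - R. g (insert c R)) = (\<Sum>(R, c)\<in>Sigma ?S' (\<lambda>R. C - R). g (insert c R))"
    using fin assms by (intro sum.Sigma) auto
  also have "\<dots> = (\<Sum>(T, c)\<in>Sigma ?S (\<lambda>T. T). g T)"
  proof (rule sum.reindex_bij_witness[where i = "\<lambda>(T, c). (T - {c}, c)"
                                        and j = "\<lambda>(R, c). (insert c R, c)"])
    fix Rc assume "Rc \<in> Sigma ?S' (\<lambda>R. C - R)"
    moreover obtain R c where "Rc = (R, c)" by fastforce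
    ultimately have R: "R \<subseteq> C" "card R = l" "c \<in> C" "c \<notin> R" and "finite R"
      using assms finite_subset by auto
    then show "(\<lambda>(T, c). (T - {c}, c)) ((\<lambda>(R, c). (insert c R, c)) Rc) = Rc"
      and "(\<lambda>(R, c). (insert c R, c)) Rc \<in> Sigma ?S (\<lambda>T. T)"
      and "(\<lambda>(T, c). g T) ((\<lambda>(R, c). (insert c R, c)) Rc) = (\<lambda>(R, c). g (insert c R)) Rc"
      using \<open>Rc = (R, c)\<close> by auto
  next
    fix Tc assume "Tc \<in> Sigma ?S (\<lambda>T. T)"
    moreover obtain T c where "Tc = (T, c)" by fastforce
    ultimately have T: "T \<subseteq> C" "card T = Suc l" "c \<in> T" and "finite T"
      using assms finite_subset by auto
    then show "(\<lambda>(R, c). (insert c R, c)) ((\<lambda>(T, c). (T - {c}, c)) Tc) = Tc"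
      and "(\<lambda>(T, c). (T - {c}, c)) Tc \<in> Sigma ?S' (\<lambda>R. C - R)"
      using \<open>Tc = (T, c)\<close> by auto
  qed
  also have "\<dots> = (\<Sum>T\<in>?S. \<Sum>c\<in>T. g T)"
    using fin assms finite_subset by (subst sum.Sigma) auto
  also have "\<dots> = (\<Sum>T\<in>?S. of_nat (Suc l) * g T)"
    by (intro sum.cong) auto
  finally show ?thesis
    by (simp add: sum_distrib_left)
qed

lemma sum_subsets_ge_if_sum_extensions_ge:
  fixes g :: "'a set \<Rightarrow> real"
  assumes "finite C"
    and ext: "\<And>R. R \<subseteq> C \<Longrightarrow> card R = l \<Longrightarrow> real (card C - l) * L \<le> (\<Sum>c\<in>C - R. g (insert c R))"
  shows "real (card {T. T \<subseteq> C \<and> card T = Suc l}) * L \<le> (\<Sum>T | T \<subseteq> C \<and> card T = Suc l. g T)"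
proof -
  let ?S' = "{R. R \<subseteq> C \<and> card R = l}" and ?S = "{T. T \<subseteq> C \<and> card T = Suc l}"
  have "real (Suc l) * (real (card ?S) * L) = (\<Sum>R\<in>?S'. \<Sum>c\<in>C - R. L)"
    using sum_subsets_insert[OF assms(1), where g = "\<lambda>_. L" and l = l] by simp
  also have "\<dots> = (\<Sum>R\<in>?S'. real (card C - l) * L)"
    using assms(1) by (intro sum.cong) (auto simp: card_Diff_subset finite_subset)
  also have "\<dots> \<le> (\<Sum>R\<in>?S'. \<Sum>c\<in>C - R. g (insert c R))"
    using ext by (intro sum_mono) auto
  also have "\<dots> = real (Suc l) * (\<Sum>T\<in>?S. g T)"
    using sum_subsets_insert[OF assms(1)] by simp
  finally show ?thesis
    by simp
qed

definition inj_tuples :: "'a set \<Rightarrow> nat \<Rightarrow> (nat \<Rightarrow> 'a) set" where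
  "inj_tuples C r = {Y \<in> {..<r} \<rightarrow>\<^sub>E C. inj_on Y {..<r}}"

lemma finite_inj_tuples:
  assumes "finite C"
  shows "finite (inj_tuples C r)"
proof (rule finite_subset)
  show "inj_tuples C r \<subseteq> {..<r} \<rightarrow>\<^sub>E C"
    by (auto simp: inj_tuples_def)
  show "finite ({..<r} \<rightarrow>\<^sub>E C)"
    using assms by (simp add: finite_PiE)
qed

lemma card_inj_tuples: "finite C \<Longrightarrow> card (inj_tuples C r) = (\<Prod>i<r. card C - i)"
  using card_inj_on_subset_funcset[of "{..<r}" C "{..<r}"]
  by (simp add: inj_tuples_def atLeast0LessThan)

lemma card_inj_tuples_ge:
  assumes "finite C" "r \<le> card C"
  shows "(1 - real (r choose 2) / real (card C)) * real (card C) ^ r \<le> real (card (inj_tuples C r))"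
proof (cases "card C = 0")
  case True
  then show ?thesis
    using assms by (simp add: card_inj_tuples)
next
  case False
  define m where "m = real (card C)"
  have "m > 0"
    using False by (simp add: m_def)
  have "(\<Sum>i<r. real i) = real (r choose 2)"
    by (induction r) (simp_all add: numeral_2_eq_2)
  then have "1 - real (r choose 2) / m = 1 - (\<Sum>i<r. real i / m)"
    by (simp add: sum_divide_distrib[symmetric])
  also have "\<dots> \<le> (\<Prod>i<r. 1 - real i / m)"
    using assms(2) \<open>m > 0\<close> by (intro Weierstrass_prod_ineq) (auto simp: m_def)
  finally have "(1 - real (r choose 2) / m) * m ^ r \<le> (\<Prod>i<r. 1 - real i / m) * m ^ r"
    using \<open>m > 0\<close> by (intro mult_right_mono) auto
  also have "\<dots> = (\<Prod>i<r. (1 - real i / m) * m)"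
    by (simp add: prod.distrib)
  also have "\<dots> = (\<Prod>i<r. m - real i)"
    using \<open>m > 0\<close> by (intro prod.cong) (auto simp: field_simps)
  also have "\<dots> = real (card (inj_tuples C r))"
    using assms by (simp add: card_inj_tuples m_def of_nat_diff)
  finally show ?thesis
    by (simp add: m_def)
qed

lemma image_inj_tuples:
  assumes "finite C"
  shows "(\<lambda>Y. Y ` {..<r}) ` inj_tuples C r = {T. T \<subseteq> C \<and> card T = r}"
proof
  show "(\<lambda>Y. Y ` {..<r}) ` inj_tuples C r \<subseteq> {T. T \<subseteq> C \<and> card T = r}"
    by (auto simp: inj_tuples_def PiE_iff card_image)
  show "{T. T \<subseteq> C \<and> card T = r} \<subseteq> (\<lambda>Y. Y ` {..<r}) ` inj_tuples C r"
  proof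
    fix T assume T: "T \<in> {T. T \<subseteq> C \<and> card T = r}"
    then have "finite T"
      using assms finite_subset by blast
    then obtain h where h: "bij_betw h {..<r} T"
      using ex_bij_betw_nat_finite T by (auto simp: atLeast0LessThan)
    then have "restrict h {..<r} \<in> inj_tuples C r"
      using T by (auto simp: inj_tuples_def bij_betw_def inj_on_def)
    moreover have "T = restrict h {..<r} ` {..<r}"
      using h by (simp add: bij_betw_def)
    ultimately show "T \<in> (\<lambda>Y. Y ` {..<r}) ` inj_tuples C r"
      by blast
  qed
qed

lemma card_inj_tuples_fibre:
  assumes "finite C" "T \<subseteq> C" "card T = r"
  shows "card {Y \<in> inj_tuples C r. Y ` {..<r} = T} = fact r"
proof -
  have "finite T"
    using assms finite_subset by blast
  have "{Y \<in> inj_tuples C r. Y ` {..<r} = T} = {Y \<in> {..<r} \<rightarrow>\<^sub>E T. inj_on Y {..<r}}"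
  proof (intro equalityI subsetI)
    fix Y assume "Y \<in> {Y \<in> {..<r} \<rightarrow>\<^sub>E T. inj_on Y {..<r}}"
    moreover from this have "Y ` {..<r} = T"
      using \<open>finite T\<close> assms(3) by (intro card_subset_eq) (auto simp: card_image)
    ultimately show "Y \<in> {Y \<in> inj_tuples C r. Y ` {..<r} = T}"
      using assms(2) by (auto simp: inj_tuples_def PiE_iff)
  qed (auto simp: inj_tuples_def PiE_iff)
  also have "card \<dots> = fact r"
    using card_inj_on_subset_funcset[of "{..<r}" T "{..<r}"] \<open>finite T\<close> assms(3)
    by (simp add: atLeast0LessThan fact_prod_rev)
  finally show ?thesis .
qed

lemma sum_inj_tuples_image:
  fixes g :: "'a set \<Rightarrow> 'b::comm_semiring_1"
  assumes "finite C"
  shows "(\<Sum>Y\<in>inj_tuples C r. g (Y ` {..<r})) = of_nat (fact r) * (\<Sum>T | T \<subseteq> C \<and> card T = r. g T)"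
proof -
  have "(\<Sum>Y\<in>inj_tuples C r. g (Y ` {..<r}))
      = (\<Sum>T | T \<subseteq> C \<and> card T = r. \<Sum>Y | Y \<in> inj_tuples C r \<and> Y ` {..<r} = T. g (Y ` {..<r}))"
    using sum.image_gen[OF finite_inj_tuples[OF assms], of "\<lambda>Y. g (Y ` {..<r})" r "\<lambda>Y. Y ` {..<r}"]
    by (simp add: image_inj_tuples[OF assms])
  also have "\<dots> = (\<Sum>T | T \<subseteq> C \<and> card T = r. of_nat (fact r) * g T)"
    using assms by (intro sum.cong refl) (simp add: card_inj_tuples_fibre)
  finally show ?thesis
    by (simp add: sum_distrib_left)
qed

lemma prob_pmf_of_set_Times:
  assumes "finite A" "A \<noteq> {}" "finite J" "J \<noteq> {}"
  shows "measure_pmf.prob (pmf_of_set (A \<times> J)) {(x, j). P x j}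
           = (\<Sum>x\<in>A. real (card {j \<in> J. P x j})) / (real (card A) * real (card J))"
proof -
  have "(A \<times> J) \<inter> {(x, j). P x j} = Sigma A (\<lambda>x. {j \<in> J. P x j})"
    by auto
  then have "card ((A \<times> J) \<inter> {(x, j). P x j}) = (\<Sum>x\<in>A. card {j \<in> J. P x j})"
    using assms by (simp add: card_SigmaI)
  then show ?thesis
    using assms by (simp add: measure_pmf_of_set card_cartesian_product)
qed

lemma vector_separating_sum_orthogonal_subsets_ge:
  fixes C :: "(nat \<Rightarrow> real ^ 'k) set"
  assumes "vector_separating n C" "finite C" "l + 2 = CARD('k)"
  shows "real (card {T. T \<subseteq> C \<and> card T = Suc l}) * log 2 (real (card C - l))
           \<le> (\<Sum>T | T \<subseteq> C \<and> card T = Suc l. real (card {j. j < n \<and> orthogonal_at T j}))"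
proof (rule sum_subsets_ge_if_sum_extensions_ge[OF assms(2)])
  fix R assume "R \<subseteq> C" "card R = l"
  moreover from this have "card (C - R) = card C - l"
    using assms(2) by (simp add: card_Diff_subset finite_subset)
  ultimately show "real (card C - l) * log 2 (real (card C - l))
      \<le> (\<Sum>c\<in>C - R. real (card {j. j < n \<and> orthogonal_at (insert c R) j}))"
    using card_mult_log_card_le_sum_orthogonal_extensions[OF assms(1,2), of R] assms(3) by simp
qed

lemma prob_orthogonal_subsets_ge:
  fixes C :: "(nat \<Rightarrow> 'a::real_inner) set"
  assumes "finite C" "r \<le> card C"
    and avg: "real (card {T. T \<subseteq> C \<and> card T = r}) * L
                \<le> (\<Sum>T | T \<subseteq> C \<and> card T = r. real (card {j. j < n \<and> orthogonal_at T j}))"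
  shows "L / real n
           \<le> measure_pmf.prob (pmf_of_set ({T. T \<subseteq> C \<and> card T = r} \<times> {..<n}))
                {(T, j). orthogonal_at T j}"
proof (cases "n = 0")
  case False
  let ?S = "{T. T \<subseteq> C \<and> card T = r}"
  have "finite ?S"
    using assms(1) by (auto intro: finite_subset[of _ "Pow C"])
  moreover have "?S \<noteq> {}"
    using obtain_subset_with_card_n[OF assms(2)] by blast
  moreover have "{..<n} \<noteq> {}"
    using False by auto
  ultimately have "measure_pmf.prob (pmf_of_set (?S \<times> {..<n})) {(T, j). orthogonal_at T j}
      = (\<Sum>T\<in>?S. real (card {j. j < n \<and> orthogonal_at T j})) / (real (card ?S) * real n)"
    by (simp add: prob_pmf_of_set_Times)
  moreover have "card ?S > 0"
    using \<open>finite ?S\<close> \<open>?S \<noteq> {}\<close> by (simp add: card_gt_0_iff)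
  then have "L / real n = real (card ?S) * L / (real (card ?S) * real n)"
    by simp
  ultimately show ?thesis
    using divide_right_mono[OF avg, of "real (card ?S) * real n"] by simp
qed simp

lemma prob_orthogonal_tuples_ge:
  fixes C :: "(nat \<Rightarrow> 'a::real_inner) set"
  assumes "finite C" "C \<noteq> {}" "r \<le> card C" "0 \<le> L"
    and avg: "real (card {T. T \<subseteq> C \<and> card T = r}) * L
                \<le> (\<Sum>T | T \<subseteq> C \<and> card T = r. real (card {j. j < n \<and> orthogonal_at T j}))"
  shows "(1 - real (r choose 2) / real (card C)) * (L / real n)
           \<le> measure_pmf.prob (pmf_of_set (({..<r} \<rightarrow>\<^sub>E C) \<times> {..<n}))
                {(Y, j). \<forall>a<r. \<forall>b<r. a \<noteq> b \<longrightarrow> Y a j \<bullet> Y b j = 0}"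
proof (cases "n = 0")
  case False
  let ?S = "{T. T \<subseteq> C \<and> card T = r}" and ?Ys = "{..<r} \<rightarrow>\<^sub>E C"
  let ?g = "\<lambda>T. real (card {j. j < n \<and> orthogonal_at T j})"
  let ?E = "\<lambda>Y j. \<forall>a<r. \<forall>b<r. a \<noteq> b \<longrightarrow> Y a j \<bullet> Y b j = 0"
  define m where "m = real (card C)"
  have "m > 0"
    using assms(1,2) by (simp add: m_def card_gt_0_iff)
  have "finite ?Ys" "?Ys \<noteq> {}" "{..<n} \<noteq> {}"
    using assms(1,2) False by (auto simp: finite_PiE PiE_eq_empty_iff)
  then have prob: "measure_pmf.prob (pmf_of_set (?Ys \<times> {..<n})) {(Y, j). ?E Y j}
      = (\<Sum>Y\<in>?Ys. real (card {j. j < n \<and> ?E Y j})) / (m ^ r * real n)"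
    by (simp add: prob_pmf_of_set_Times card_funcsetE m_def)
  have "(1 - real (r choose 2) / m) * m ^ r * L \<le> real (card (inj_tuples C r)) * L"
    using card_inj_tuples_ge[OF assms(1,3)] assms(4) by (intro mult_right_mono) (auto simp: m_def)
  also have "\<dots> = of_nat (fact r) * (real (card ?S) * L)"
    using sum_inj_tuples_image[OF assms(1), where g = "\<lambda>_. 1::real" and r = r] by simp
  also have "\<dots> \<le> of_nat (fact r) * (\<Sum>T\<in>?S. ?g T)"
    using avg by simp
  also have "\<dots> = (\<Sum>Y\<in>inj_tuples C r. ?g (Y ` {..<r}))"
    using sum_inj_tuples_image[OF assms(1), where g = ?g and r = r] by simp
  also have "\<dots> = (\<Sum>Y\<in>inj_tuples C r. real (card {j. j < n \<and> ?E Y j}))"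
    by (intro sum.cong refl) (simp add: inj_tuples_def orthogonal_at_image_iff Ball_def)
  also have "\<dots> \<le> (\<Sum>Y\<in>?Ys. real (card {j. j < n \<and> ?E Y j}))"
    using \<open>finite ?Ys\<close> by (intro sum_mono2) (auto simp: inj_tuples_def)
  finally have "(1 - real (r choose 2) / m) * m ^ r * L / (m ^ r * real n)
      \<le> measure_pmf.prob (pmf_of_set (?Ys \<times> {..<n})) {(Y, j). ?E Y j}"
    unfolding prob using \<open>m > 0\<close> by (intro divide_right_mono) simp_all
  then show ?thesis
    using \<open>m > 0\<close> by (simp add: m_def)
qed simp

lemma Suc_choose_two_le_square: "Suc l choose 2 \<le> l\<^sup>2"
  using div_le_mono[of "l + l * l" "2 * (l * l)" 2] le_square[of l]
  by (simp add: choose_two power2_eq_square)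

theorem mainTheorem10:
  fixes C :: "(nat \<Rightarrow> real ^ 'k) set" and n :: nat
  assumes "CARD('k) \<ge> 3"
    and "vector_separating n C"
    and "card C > CARD('k)"
  shows "log 2 (real (card C) - (real CARD('k) - 2)) / real n
           \<le> measure_pmf.prob
                (pmf_of_set ({T. T \<subseteq> C \<and> card T = CARD('k) - 1} \<times> {..<n}))
                {(T, j). \<forall>x\<in>T. \<forall>y\<in>T. x \<noteq> y \<longrightarrow> x j \<bullet> y j = 0}
       \<and> (1 - (real CARD('k) - 2)^2 / real (card C)) *
           (log 2 (real (card C) - (real CARD('k) - 2)) / real n)
           \<le> measure_pmf.prob
                (pmf_of_set (PiE {..<CARD('k) - 1} (\<lambda>_. C) \<times> {..<n}))
                {(Y, j). \<forall>a<CARD('k) - 1. \<forall>b<CARD('k) - 1. a \<noteq> b \<longrightarrow> Y a j \<bullet> Y b j = 0}"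
proof -
  define l where "l = CARD('k) - 2"
  define L where "L = log 2 (real (card C - l))"
  have k: "l + 2 = CARD('k)" "CARD('k) - 1 = Suc l" "real CARD('k) - 2 = real l"
    "real (card C) - real l = real (card C - l)"
    using assms(1,3) by (auto simp: l_def of_nat_diff)
  have C: "finite C" "C \<noteq> {}" "Suc l \<le> card C"
    using assms(1,3) by (auto simp: l_def intro: card_ge_0_finite)
  have "0 \<le> L"
    using assms(1,3) by (simp add: L_def l_def)
  note avg = vector_separating_sum_orthogonal_subsets_ge[OF assms(2) C(1) k(1), folded L_def]
  have "real (Suc l choose 2) \<le> real l ^ 2"
    using Suc_choose_two_le_square by (metis of_nat_le_iff of_nat_power)
  then have "(1 - real l ^ 2 / real (card C)) * (L / real n)
      \<le> (1 - real (Suc l choose 2) / real (card C)) * (L / real n)"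
    using \<open>0 \<le> L\<close> by (intro mult_right_mono diff_left_mono divide_right_mono) auto
  also have "\<dots> \<le> measure_pmf.prob (pmf_of_set (({..<Suc l} \<rightarrow>\<^sub>E C) \<times> {..<n}))
      {(Y, j). \<forall>a<Suc l. \<forall>b<Suc l. a \<noteq> b \<longrightarrow> Y a j \<bullet> Y b j = 0}"
    by (rule prob_orthogonal_tuples_ge[OF C \<open>0 \<le> L\<close> avg])
  finally show ?thesis
    using prob_orthogonal_subsets_ge[OF C(1,3) avg]
    unfolding k L_def orthogonal_at_def by simp
qed

end
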